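(* Let $W$ be a neat, upward-restricted layered wheel with rooted tree $T$. Then every class $\mathcal F$ of finite induced subgraphs of $W$ that satisfies the bounded-branch property in $W$ has bounded treewidth (i.e., there is a constant $c$ with $\operatorname{tw}(G')\le c$ for all $G'\in\mathcal F$).
   Context: A layered wheel is a countably infinite graph $W$ on the same vertex set as a countably infinite, locally finite (every node has finite degree) rooted tree $T$ embedded in the plane, such that: (1) for every natural number $n$, the set $L_n$ of nodes at distance $n$ from the root of $T$ (the $n$-th layer) induces in $W$ a finite path which visits the nodes of $L_n$ in the left-to-right order given by the planar embedding of $T$; the edges of $W$ with both endpoints in a common layer are the layer edges, and their set is denoted $E_L$; (2) every edge of $W$ not in $E_L$ joins two nodes one of which is an ancestor of the other in $T$; (3) there is a finite bound on the number of vertices of any path in $T$ consisting only of nodes of degree $2$ in $T$. A node is considered its own ancestor and descendant. $W$ is neat if $T$ has no leaf. $W$ is upward-restricted if there is an integer $t$ such that for every node $v$ of $T$ there is a set $X_v$ of at most $t$ ancestors of $v$ such that, in $W - E_L$, every edge with exactly one endpoint among the descendants of $v$ has its other endpoint in $X_v$. A downward path in $T$ starting at $v$ is a maximal (possibly infinite) path starting at $v$ that iteratively moves from the current node to one of its children as long as the current node is not a leaf. A family $\mathcal F$ of induced subgraphs of $W$ satisfies the bounded-branch property (in $W$) if there is an integer $h$ such that for every $G'\in\mathcal F$ and every $v\in V(T)$ (not necessarily in $V(G')$), there is a downward path in $T$ starting at $v$ containing at most $h$ vertices of $G'$. *)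

theory Defs
  imports Main "HOL-Library.Countable_Set"
begin

definition rooted_tree :: "'v set \<Rightarrow> 'v \<Rightarrow> ('v \<Rightarrow> 'v) \<Rightarrow> bool" where
  "rooted_tree V r par \<longleftrightarrow> r \<in> V \<and> par r = r \<and> (\<forall>v\<in>V. par v \<in> V)
     \<and> (\<forall>v\<in>V. \<exists>n. (par ^^ n) v = r)"

definition anc :: "('v \<Rightarrow> 'v) \<Rightarrow> 'v \<Rightarrow> 'v \<Rightarrow> bool" where
  "anc par u v \<longleftrightarrow> (\<exists>n. (par ^^ n) v = u)"

definition depth :: "('v \<Rightarrow> 'v) \<Rightarrow> 'v \<Rightarrow> 'v \<Rightarrow> nat" where
  "depth par r v = (LEAST n. (par ^^ n) v = r)"

definition layer :: "'v set \<Rightarrow> 'v \<Rightarrow> ('v \<Rightarrow> 'v) \<Rightarrow> nat \<Rightarrow> 'v set" where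
  "layer V r par n = {v \<in> V. depth par r v = n}"

definition children :: "'v set \<Rightarrow> 'v \<Rightarrow> ('v \<Rightarrow> 'v) \<Rightarrow> 'v \<Rightarrow> 'v set" where
  "children V r par v = {c \<in> V. c \<noteq> r \<and> par c = v}"

definition tree_adj :: "'v set \<Rightarrow> ('v \<Rightarrow> 'v) \<Rightarrow> 'v \<Rightarrow> 'v \<Rightarrow> bool" where
  "tree_adj V par u v \<longleftrightarrow> u \<in> V \<and> v \<in> V \<and> u \<noteq> v \<and> (par u = v \<or> par v = u)"

definition tree_degree :: "'v set \<Rightarrow> ('v \<Rightarrow> 'v) \<Rightarrow> 'v \<Rightarrow> nat" where
  "tree_degree V par v = card {u. tree_adj V par v u}"

definition tree_path :: "'v set \<Rightarrow> ('v \<Rightarrow> 'v) \<Rightarrow> 'v list \<Rightarrow> bool" where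
  "tree_path V par xs \<longleftrightarrow> distinct xs \<and> set xs \<subseteq> V
     \<and> (\<forall>i. Suc i < length xs \<longrightarrow> tree_adj V par (xs ! i) (xs ! Suc i))"

text \<open>Planar embedding of the rooted tree, recorded via the induced left-to-right
  order of each layer: pos gives the position within the layer; orders of consecutive
  layers are compatible (no crossing of tree edges).\<close>
definition planar_layer_order :: "'v set \<Rightarrow> 'v \<Rightarrow> ('v \<Rightarrow> 'v) \<Rightarrow> ('v \<Rightarrow> nat) \<Rightarrow> bool" where
  "planar_layer_order V r par pos \<longleftrightarrow>
     (\<forall>n. inj_on pos (layer V r par n))
   \<and> (\<forall>u\<in>V. \<forall>w\<in>V. depth par r u = depth par r w \<and> pos u < pos w
        \<longrightarrow> pos (par u) \<le> pos (par w))"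

definition layered_wheel ::
  "'v set \<Rightarrow> 'v \<Rightarrow> ('v \<Rightarrow> 'v) \<Rightarrow> ('v \<Rightarrow> nat) \<Rightarrow> ('v \<Rightarrow> 'v \<Rightarrow> bool) \<Rightarrow> bool" where
  "layered_wheel V r par pos E \<longleftrightarrow>
     countable V \<and> infinite V \<and> rooted_tree V r par
   \<and> (\<forall>v\<in>V. finite (children V r par v))
   \<and> planar_layer_order V r par pos
   \<and> (\<forall>u w. E u w \<longrightarrow> u \<in> V \<and> w \<in> V \<and> u \<noteq> w \<and> E w u)
   \<comment> \<open>(1) each layer is finite and induces the path in left-to-right order\<close>
   \<and> (\<forall>n. finite (layer V r par n))
   \<and> (\<forall>n. \<forall>u\<in>layer V r par n. \<forall>w\<in>layer V r par n.
        E u w \<longleftrightarrow>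
          ((pos u < pos w \<and> \<not> (\<exists>x\<in>layer V r par n. pos u < pos x \<and> pos x < pos w))
         \<or> (pos w < pos u \<and> \<not> (\<exists>x\<in>layer V r par n. pos w < pos x \<and> pos x < pos u))))
   \<comment> \<open>(2) non-layer edges join ancestor/descendant pairs\<close>
   \<and> (\<forall>u w. E u w \<and> depth par r u \<noteq> depth par r w \<longrightarrow> anc par u w \<or> anc par w u)
   \<comment> \<open>(3) bounded length of paths of degree-2 nodes in T\<close>
   \<and> (\<exists>k. \<forall>xs. tree_path V par xs \<and> (\<forall>x\<in>set xs. tree_degree V par x = 2)
        \<longrightarrow> length xs \<le> k)"

definition neat :: "'v set \<Rightarrow> 'v \<Rightarrow> ('v \<Rightarrow> 'v) \<Rightarrow> bool" where
  "neat V r par \<longleftrightarrow> (\<forall>v\<in>V. children V r par v \<noteq> {})"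

definition upward_restricted ::
  "'v set \<Rightarrow> 'v \<Rightarrow> ('v \<Rightarrow> 'v) \<Rightarrow> ('v \<Rightarrow> 'v \<Rightarrow> bool) \<Rightarrow> bool" where
  "upward_restricted V r par E \<longleftrightarrow>
     (\<exists>t::nat. \<forall>v\<in>V. \<exists>X. finite X \<and> card X \<le> t \<and> (\<forall>x\<in>X. anc par x v)
        \<and> (\<forall>a b. E a b \<and> depth par r a \<noteq> depth par r b \<and> anc par v a \<and> \<not> anc par v b
               \<longrightarrow> b \<in> X))"

text \<open>Downward path from v: maximal; moves to a child while there is one
  (stays put once a leaf is reached, so its vertex set is the range).\<close>
definition downward_path :: "'v set \<Rightarrow> 'v \<Rightarrow> ('v \<Rightarrow> 'v) \<Rightarrow> 'v \<Rightarrow> (nat \<Rightarrow> 'v) \<Rightarrow> bool" where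
  "downward_path V r par v f \<longleftrightarrow> f 0 = v \<and>
     (\<forall>i. (children V r par (f i) \<noteq> {} \<longrightarrow> f (Suc i) \<in> children V r par (f i))
        \<and> (children V r par (f i) = {} \<longrightarrow> f (Suc i) = f i))"

text \<open>Induced subgraphs are identified with their vertex sets.\<close>
definition bounded_branch :: "'v set \<Rightarrow> 'v \<Rightarrow> ('v \<Rightarrow> 'v) \<Rightarrow> 'v set set \<Rightarrow> bool" where
  "bounded_branch V r par F \<longleftrightarrow>
     (\<exists>h::nat. \<forall>S\<in>F. \<forall>v\<in>V. \<exists>f. downward_path V r par v f
        \<and> finite (range f \<inter> S) \<and> card (range f \<inter> S) \<le> h)"

definition tree_decomp ::
  "'v set \<Rightarrow> ('v \<Rightarrow> 'v \<Rightarrow> bool) \<Rightarrow> nat set \<Rightarrow> (nat \<Rightarrow> nat) \<Rightarrow> nat \<Rightarrow> (nat \<Rightarrow> 'v set) \<Rightarrow> bool" where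
  "tree_decomp S E I p i0 B \<longleftrightarrow>
     finite I \<and> i0 \<in> I \<and> p i0 = i0 \<and> (\<forall>i\<in>I. p i \<in> I) \<and> (\<forall>i\<in>I. \<exists>n. (p ^^ n) i = i0)
   \<and> (\<forall>i\<in>I. B i \<subseteq> S)
   \<and> (\<forall>v\<in>S. \<exists>i\<in>I. v \<in> B i)
   \<and> (\<forall>u\<in>S. \<forall>v\<in>S. E u v \<longrightarrow> (\<exists>i\<in>I. u \<in> B i \<and> v \<in> B i))
   \<and> (\<forall>v\<in>S. \<forall>i\<in>I. \<forall>j\<in>I. v \<in> B i \<and> v \<in> B j \<longrightarrow>
        (\<lambda>a b. a \<in> I \<and> b \<in> I \<and> v \<in> B a \<and> v \<in> B b \<and> (p a = b \<or> p b = a))\<^sup>*\<^sup>* i j)"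

definition treewidth :: "'v set \<Rightarrow> ('v \<Rightarrow> 'v \<Rightarrow> bool) \<Rightarrow> nat" where
  "treewidth S E = (LEAST k. \<exists>I p i0 B. tree_decomp S E I p i0 B
                                  \<and> (\<forall>i\<in>I. card (B i) \<le> k + 1))"

end

theory Submission
  imports Defs
begin

(* Cut the wheel below depth m into regions bounded on either side by a downward ray, or unbounded.
   The vertices of S in such a region, together with their neighbours in S above depth m, form a
   piece.  If the top layer of a region has at most two parents, upward restriction leaves at most
   2(t+1) such upper neighbours.  A piece is decomposed recursively: if every top vertex of the region
   starts one of its boundary rays, descend one layer; otherwise split the region along a downward
   ray from another top vertex, chosen by the bounded-branch property to meet S in at most h
   vertices.  No edge of the wheel crosses a ray, so the parts only interact through the new ray and
   the upper neighbours, and the decompositions of the parts glue below a bag with at most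
   2(t+1) + 3h vertices. *)

section \<open>Rooted tree decompositions\<close>

definition decomp_top :: "(nat \<Rightarrow> nat) \<Rightarrow> nat \<Rightarrow> (nat \<Rightarrow> 'v set) \<Rightarrow> 'v \<Rightarrow> nat \<Rightarrow> bool" where
  "decomp_top p i0 B v i \<longleftrightarrow> v \<in> B i \<and> (i = i0 \<or> v \<notin> B (p i))"

text \<open>Instead of connectivity of the nodes whose bags contain v, we ask that they have a unique
  highest node. In a rooted tree the two are equivalent, and the latter is easily seen to survive
  gluing.\<close>
definition rooted_decomp ::
  "'v set \<Rightarrow> ('v \<Rightarrow> 'v \<Rightarrow> bool) \<Rightarrow> nat set \<Rightarrow> (nat \<Rightarrow> nat) \<Rightarrow> nat \<Rightarrow> (nat \<Rightarrow> 'v set) \<Rightarrow> bool" where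
  "rooted_decomp S E I p i0 B \<longleftrightarrow>
     finite I \<and> i0 \<in> I \<and> p i0 = i0 \<and> (\<forall>i\<in>I. p i \<in> I) \<and> (\<forall>i\<in>I. \<exists>n. (p ^^ n) i = i0)
   \<and> (\<forall>i\<in>I. B i \<subseteq> S)
   \<and> (\<forall>v\<in>S. \<exists>i\<in>I. v \<in> B i)
   \<and> (\<forall>u\<in>S. \<forall>v\<in>S. E u v \<longrightarrow> (\<exists>i\<in>I. u \<in> B i \<and> v \<in> B i))
   \<and> (\<forall>v. \<forall>i\<in>I. \<forall>j\<in>I. decomp_top p i0 B v i \<longrightarrow> decomp_top p i0 B v j \<longrightarrow> i = j)"

lemma rooted_decomp_single: "rooted_decomp A E {0} (\<lambda>_. 0) 0 (\<lambda>_. A)"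
  unfolding rooted_decomp_def by (auto intro: exI[of _ 0])

lemma rooted_decompI:
  assumes "finite I" "i0 \<in> I" "p i0 = i0" "\<And>i. i \<in> I \<Longrightarrow> p i \<in> I" "\<And>i. i \<in> I \<Longrightarrow> \<exists>n. (p ^^ n) i = i0"
    "\<And>i. i \<in> I \<Longrightarrow> B i \<subseteq> S" "\<And>v. v \<in> S \<Longrightarrow> \<exists>i\<in>I. v \<in> B i"
    "\<And>u v. u \<in> S \<Longrightarrow> v \<in> S \<Longrightarrow> E u v \<Longrightarrow> \<exists>i\<in>I. u \<in> B i \<and> v \<in> B i"
    "\<And>i j v. i \<in> I \<Longrightarrow> j \<in> I \<Longrightarrow> decomp_top p i0 B v i \<Longrightarrow> decomp_top p i0 B v j \<Longrightarrow> i = j"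
  shows "rooted_decomp S E I p i0 B"
  using assms unfolding rooted_decomp_def by blast

lemma rooted_decompD:
  assumes "rooted_decomp S E I p i0 B"
  shows "finite I" "i0 \<in> I" "p i0 = i0" "i \<in> I \<Longrightarrow> p i \<in> I" "i \<in> I \<Longrightarrow> \<exists>n. (p ^^ n) i = i0"
    "i \<in> I \<Longrightarrow> B i \<subseteq> S" "v \<in> S \<Longrightarrow> \<exists>i\<in>I. v \<in> B i"
    "u \<in> S \<Longrightarrow> v \<in> S \<Longrightarrow> E u v \<Longrightarrow> \<exists>i\<in>I. u \<in> B i \<and> v \<in> B i"
    "i \<in> I \<Longrightarrow> j \<in> I \<Longrightarrow> decomp_top p i0 B v i \<Longrightarrow> decomp_top p i0 B v j \<Longrightarrow> i = j"
  using assms unfolding rooted_decomp_def by blast+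

lemma rooted_decomp_reaches_top:
  assumes D: "rooted_decomp S E I p i0 B" and "i \<in> I" "v \<in> B i"
  shows "\<exists>j\<in>I. decomp_top p i0 B v j \<and>
    (\<lambda>a b. a \<in> I \<and> b \<in> I \<and> v \<in> B a \<and> v \<in> B b \<and> (p a = b \<or> p b = a))\<^sup>*\<^sup>* i j"
proof -
  obtain n where "(p ^^ n) i = i0" using rooted_decompD(5)[OF D \<open>i \<in> I\<close>] by blast
  with \<open>i \<in> I\<close> \<open>v \<in> B i\<close> show ?thesis
  proof (induction n arbitrary: i)
    case 0
    then show ?case by (auto simp: decomp_top_def)
  next
    case (Suc n)
    show ?case
    proof (cases "v \<in> B (p i)")
      case True
      have "p i \<in> I" using rooted_decompD(4)[OF D] Suc.prems by blast
      moreover have "(p ^^ n) (p i) = i0" using Suc.prems(3) by (simp add: funpow_swap1)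
      ultimately obtain j where "j \<in> I" "decomp_top p i0 B v j"
        "(\<lambda>a b. a \<in> I \<and> b \<in> I \<and> v \<in> B a \<and> v \<in> B b \<and> (p a = b \<or> p b = a))\<^sup>*\<^sup>* (p i) j"
        using True Suc.IH by blast
      then show ?thesis using Suc.prems \<open>p i \<in> I\<close> True by (blast intro: converse_rtranclp_into_rtranclp)
    next
      case False
      then show ?thesis using Suc.prems by (auto simp: decomp_top_def)
    qed
  qed
qed

lemma rooted_decomp_imp_tree_decomp:
  assumes D: "rooted_decomp S E I p i0 B"
  shows "tree_decomp S E I p i0 B"
proof -
  have "(\<lambda>a b. a \<in> I \<and> b \<in> I \<and> v \<in> B a \<and> v \<in> B b \<and> (p a = b \<or> p b = a))\<^sup>*\<^sup>* i j"
    if ij: "i \<in> I" "j \<in> I" and v: "v \<in> B i" "v \<in> B j" for v i j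
  proof -
    let ?R = "\<lambda>a b. a \<in> I \<and> b \<in> I \<and> v \<in> B a \<and> v \<in> B b \<and> (p a = b \<or> p b = a)"
    obtain k where k: "k \<in> I" "decomp_top p i0 B v k" "?R\<^sup>*\<^sup>* i k"
      using rooted_decomp_reaches_top[OF D ij(1) v(1)] by blast
    obtain l where l: "l \<in> I" "decomp_top p i0 B v l" "?R\<^sup>*\<^sup>* j l"
      using rooted_decomp_reaches_top[OF D ij(2) v(2)] by blast
    have "k = l" using rooted_decompD(9)[OF D] k l by blast
    have "?R\<^sup>*\<^sup>* l j" using l(3)
      by (induction rule: rtranclp_induct) (auto intro: converse_rtranclp_into_rtranclp)
    then show ?thesis using k(3) \<open>k = l\<close> by (blast intro: rtranclp_trans)
  qed
  then show ?thesis using D unfolding rooted_decomp_def tree_decomp_def by blast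
qed

context
  fixes A1 :: "'v set" and E I1 p1 a1 B1 and e :: "nat \<Rightarrow> nat" and p z B
  assumes D1: "rooted_decomp A1 E I1 p1 a1 B1"
    and hang_par: "\<And>i. i \<in> I1 \<Longrightarrow> p (e i) = (if i = a1 then z else e (p1 i))"
    and hang_bag: "\<And>i. i \<in> I1 \<Longrightarrow> B (e i) = B1 i"
    and par_z: "p z = z"
begin

lemma hang_reaches_root: "i \<in> I1 \<Longrightarrow> \<exists>n. (p ^^ n) (e i) = z"
proof -
  assume "i \<in> I1"
  then obtain n where "(p1 ^^ n) i = a1" using rooted_decompD(5)[OF D1] by blast
  with \<open>i \<in> I1\<close> have "(p ^^ Suc n) (e i) = z"
  proof (induction n arbitrary: i)
    case 0
    then show ?case by (simp add: hang_par)
  next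
    case (Suc n)
    show ?case
    proof (cases "i = a1")
      case True
      have "(p ^^ m) z = z" for m by (induction m) (simp_all add: par_z)
      then show ?thesis using True Suc.prems by (simp add: funpow_Suc_right hang_par par_z del: funpow.simps)
    next
      case False
      have "p1 i \<in> I1" using rooted_decompD(4)[OF D1] Suc.prems by blast
      moreover have "(p1 ^^ n) (p1 i) = a1" using Suc.prems(2) by (simp add: funpow_swap1)
      ultimately have "(p ^^ Suc n) (e (p1 i)) = z" by (rule Suc.IH)
      then show ?thesis using False Suc.prems
        by (simp only: funpow_Suc_right comp_apply hang_par if_False)
    qed
  qed
  then show ?thesis by blast
qed

lemma hang_top:
  assumes i: "i \<in> I1" and "e i \<noteq> z" and root_bag: "A1 \<inter> B z \<subseteq> B1 a1"
    and top: "decomp_top p z B v (e i)"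
  shows "decomp_top p1 a1 B1 v i \<and> v \<notin> B z"
proof -
  have vi: "v \<in> B1 i" using top hang_bag[OF i] by (simp add: decomp_top_def)
  have up: "v \<notin> B (p (e i))" using top \<open>e i \<noteq> z\<close> by (simp add: decomp_top_def)
  have top1: "decomp_top p1 a1 B1 v i"
  proof (cases "i = a1")
    case True
    then show ?thesis using vi by (simp add: decomp_top_def)
  next
    case False
    have "p1 i \<in> I1" using rooted_decompD(4)[OF D1 i] .
    then show ?thesis using vi up False hang_par[OF i] hang_bag by (simp add: decomp_top_def)
  qed
  have "v \<notin> B z"
  proof
    assume vz: "v \<in> B z"
    have "v \<in> A1" using rooted_decompD(6)[OF D1 i] vi by blast
    then have "decomp_top p1 a1 B1 v a1" using vz root_bag by (auto simp: decomp_top_def)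
    then have "i = a1" using rooted_decompD(2,9)[OF D1] i top1 by blast
    then show False using up vz hang_par[OF i] by simp
  qed
  with top1 show ?thesis by blast
qed

end

text \<open>Gluing two decompositions below a new root bag: the root is node 0, node i of the first
  tree becomes 2i+1 and node i of the second becomes 2i+2.\<close>

definition glue_nodes :: "nat set \<Rightarrow> nat set \<Rightarrow> nat set" where
  "glue_nodes I1 I2 = insert 0 ((\<lambda>i. Suc (2 * i)) ` I1 \<union> (\<lambda>i. Suc (Suc (2 * i))) ` I2)"

definition glue_par :: "(nat \<Rightarrow> nat) \<Rightarrow> nat \<Rightarrow> (nat \<Rightarrow> nat) \<Rightarrow> nat \<Rightarrow> nat \<Rightarrow> nat" where
  "glue_par p1 a1 p2 a2 n = (if n = 0 then 0
     else if odd n then (if n div 2 = a1 then 0 else Suc (2 * p1 (n div 2)))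
     else (if n div 2 - 1 = a2 then 0 else Suc (Suc (2 * p2 (n div 2 - 1)))))"

definition glue_bag :: "'v set \<Rightarrow> (nat \<Rightarrow> 'v set) \<Rightarrow> (nat \<Rightarrow> 'v set) \<Rightarrow> nat \<Rightarrow> 'v set" where
  "glue_bag Y B1 B2 n = (if n = 0 then Y else if odd n then B1 (n div 2) else B2 (n div 2 - 1))"

lemma glue_par_simps [simp]:
  "glue_par p1 a1 p2 a2 0 = 0"
  "glue_par p1 a1 p2 a2 (Suc (2 * i)) = (if i = a1 then 0 else Suc (2 * p1 i))"
  "glue_par p1 a1 p2 a2 (Suc (Suc (2 * i))) = (if i = a2 then 0 else Suc (Suc (2 * p2 i)))"
  by (simp_all add: glue_par_def)

lemma glue_bag_simps [simp]:
  "glue_bag Y B1 B2 0 = Y" "glue_bag Y B1 B2 (Suc (2 * i)) = B1 i" "glue_bag Y B1 B2 (Suc (Suc (2 * i))) = B2 i"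
  by (simp_all add: glue_bag_def)

lemma glue_tree:
  assumes D1: "rooted_decomp A1 E I1 p1 a1 B1" and D2: "rooted_decomp A2 E I2 p2 a2 B2"
  shows "finite (glue_nodes I1 I2)" "n \<in> glue_nodes I1 I2 \<Longrightarrow> glue_par p1 a1 p2 a2 n \<in> glue_nodes I1 I2"
    "n \<in> glue_nodes I1 I2 \<Longrightarrow> \<exists>k. (glue_par p1 a1 p2 a2 ^^ k) n = 0"
  using rooted_decompD[OF D1] rooted_decompD[OF D2]
    hang_reaches_root[OF D1 glue_par_simps(2) glue_bag_simps(2) glue_par_simps(1)]
    hang_reaches_root[OF D2 glue_par_simps(3) glue_bag_simps(3) glue_par_simps(1)]
  by (auto simp: glue_nodes_def intro: exI[of _ 0])

lemma glue_top:
  assumes D1: "rooted_decomp A1 E I1 p1 a1 B1" and D2: "rooted_decomp A2 E I2 p2 a2 B2"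
    and root1: "A1 \<inter> Y \<subseteq> B1 a1" and root2: "A2 \<inter> Y \<subseteq> B2 a2"
    and n: "n \<in> glue_nodes I1 I2" and top: "decomp_top (glue_par p1 a1 p2 a2) 0 (glue_bag Y B1 B2) v n"
  shows "(n = 0 \<and> v \<in> Y) \<or> (v \<notin> Y \<and> ((\<exists>i\<in>I1. n = Suc (2 * i) \<and> decomp_top p1 a1 B1 v i)
    \<or> (\<exists>i\<in>I2. n = Suc (Suc (2 * i)) \<and> decomp_top p2 a2 B2 v i)))"
proof -
  have root1': "A1 \<inter> glue_bag Y B1 B2 0 \<subseteq> B1 a1" and root2': "A2 \<inter> glue_bag Y B1 B2 0 \<subseteq> B2 a2"
    using root1 root2 by simp_all
  consider "n = 0" | i where "i \<in> I1" "n = Suc (2 * i)" | i where "i \<in> I2" "n = Suc (Suc (2 * i))"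
    using n unfolding glue_nodes_def by blast
  then show ?thesis
  proof cases
    case 1
    then show ?thesis using top by (simp add: decomp_top_def)
  next
    case (2 i)
    then show ?thesis
      using hang_top[OF D1 glue_par_simps(2) glue_bag_simps(2) glue_par_simps(1) 2(1) _ root1'] top
      by auto
  next
    case (3 i)
    then show ?thesis
      using hang_top[OF D2 glue_par_simps(3) glue_bag_simps(3) glue_par_simps(1) 3(1) _ root2'] top
      by auto
  qed
qed

lemma rooted_decomp_glue:
  assumes D1: "rooted_decomp A1 E I1 p1 a1 B1" and D2: "rooted_decomp A2 E I2 p2 a2 B2"
    and overlap: "A1 \<inter> A2 \<subseteq> Y" and root1: "A1 \<inter> Y \<subseteq> B1 a1" and root2: "A2 \<inter> Y \<subseteq> B2 a2"
    and edges: "\<And>u v. u \<in> A1 \<union> A2 \<union> Y - Y \<Longrightarrow> v \<in> A1 \<union> A2 \<union> Y \<Longrightarrow> E u v \<or> E v u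
      \<Longrightarrow> (u \<in> A1 \<and> v \<in> A1) \<or> (u \<in> A2 \<and> v \<in> A2)"
    and width: "\<forall>i\<in>I1. card (B1 i) \<le> k" "\<forall>i\<in>I2. card (B2 i) \<le> k" "card Y \<le> k"
  shows "\<exists>I p i0 B. rooted_decomp (A1 \<union> A2 \<union> Y) E I p i0 B \<and> B i0 = Y \<and> (\<forall>i\<in>I. card (B i) \<le> k)"
proof -
  let ?I = "glue_nodes I1 I2" and ?p = "glue_par p1 a1 p2 a2" and ?B = "glue_bag Y B1 B2"
  note d1 = rooted_decompD[OF D1] and d2 = rooted_decompD[OF D2]
  have bags: "?B n \<subseteq> A1 \<union> A2 \<union> Y" if "n \<in> ?I" for n
    using that d1(6) d2(6) unfolding glue_nodes_def by (auto; blast)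
  have cover: "\<exists>n\<in>?I. v \<in> ?B n" if "v \<in> A1 \<union> A2 \<union> Y" for v
  proof -
    have "v \<in> Y \<or> (\<exists>i\<in>I1. v \<in> B1 i) \<or> (\<exists>i\<in>I2. v \<in> B2 i)"
      using d1(7) d2(7) that by blast
    then show ?thesis by (force simp: glue_nodes_def)
  qed
  have edge_bags: "\<exists>n\<in>?I. u \<in> ?B n \<and> v \<in> ?B n"
    if uv: "u \<in> A1 \<union> A2 \<union> Y" "v \<in> A1 \<union> A2 \<union> Y" and e: "E u v" for u v
  proof -
    have "(u \<in> Y \<and> v \<in> Y) \<or> (\<exists>i\<in>I1. u \<in> B1 i \<and> v \<in> B1 i) \<or> (\<exists>i\<in>I2. u \<in> B2 i \<and> v \<in> B2 i)"
      using edges[of u v] edges[of v u] uv e d1(8) d2(8) by blast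
    then show ?thesis by (force simp: glue_nodes_def)
  qed
  have unique: "n = n'" if n: "n \<in> ?I" "n' \<in> ?I" and top: "decomp_top ?p 0 ?B v n" "decomp_top ?p 0 ?B v n'"
    for n n' v
  proof -
    note cases = glue_top[OF D1 D2 root1 root2 n(1) top(1)] glue_top[OF D1 D2 root1 root2 n(2) top(2)]
    have in1: "v \<in> A1" if "i \<in> I1" "decomp_top p1 a1 B1 v i" for i
      using that d1(6) by (auto simp: decomp_top_def)
    have in2: "v \<in> A2" if "i \<in> I2" "decomp_top p2 a2 B2 v i" for i
      using that d2(6) by (auto simp: decomp_top_def)
    show ?thesis
    proof (cases "v \<in> Y")
      case True
      then show ?thesis using cases by blast
    next
      case False
      then have "v \<notin> A1 \<or> v \<notin> A2" using overlap by blast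
      moreover have "(\<exists>i\<in>I1. n = Suc (2 * i) \<and> decomp_top p1 a1 B1 v i)
          \<or> (\<exists>i\<in>I2. n = Suc (Suc (2 * i)) \<and> decomp_top p2 a2 B2 v i)"
        "(\<exists>i\<in>I1. n' = Suc (2 * i) \<and> decomp_top p1 a1 B1 v i)
          \<or> (\<exists>i\<in>I2. n' = Suc (Suc (2 * i)) \<and> decomp_top p2 a2 B2 v i)"
        using cases False by blast+
      ultimately show ?thesis
        by (elim disjE bexE conjE; metis d1(9) d2(9) in1 in2)
    qed
  qed
  have "0 \<in> ?I" by (simp add: glue_nodes_def)
  then have "rooted_decomp (A1 \<union> A2 \<union> Y) E ?I ?p 0 ?B"
    using glue_tree[OF D1 D2] glue_par_simps(1) bags cover edge_bags unique by (intro rooted_decompI)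
  moreover have "\<forall>n\<in>?I. card (?B n) \<le> k"
    using width by (auto simp: glue_nodes_def)
  ultimately show ?thesis by (intro exI[of _ ?I] exI[of _ ?p] exI[of _ 0] exI[of _ ?B]) simp
qed

lemma rooted_decomp_extend:
  assumes D1: "rooted_decomp A1 E I1 p1 a1 B1" and root1: "A1 \<inter> Y \<subseteq> B1 a1"
    and edges: "\<And>u v. u \<in> A1 - Y \<Longrightarrow> v \<in> A1 \<union> Y \<Longrightarrow> E u v \<or> E v u \<Longrightarrow> v \<in> A1"
    and width: "\<forall>i\<in>I1. card (B1 i) \<le> k" "card Y \<le> k"
  shows "\<exists>I p i0 B. rooted_decomp (A1 \<union> Y) E I p i0 B \<and> B i0 = Y \<and> (\<forall>i\<in>I. card (B i) \<le> k)"
proof -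
  have "\<exists>I p i0 B. rooted_decomp (A1 \<union> {} \<union> Y) E I p i0 B \<and> B i0 = Y \<and> (\<forall>i\<in>I. card (B i) \<le> k)"
    by (rule rooted_decomp_glue[OF D1 rooted_decomp_single _ root1 _ _ width(1) _ width(2)])
      (use edges in auto)
  then show ?thesis by simp
qed

section \<open>Planar rooted trees and rays\<close>

lemma card_set_option_le: "card (set_option x) \<le> 1"
  by (cases x) simp_all

locale planar_tree =
  fixes V :: "'v set" and r :: 'v and par :: "'v \<Rightarrow> 'v" and pos :: "'v \<Rightarrow> nat"
  assumes rooted: "rooted_tree V r par" and planar: "planar_layer_order V r par pos"
begin

abbreviation dp :: "'v \<Rightarrow> nat" where "dp \<equiv> depth par r"

lemma par_in_V: "v \<in> V \<Longrightarrow> par v \<in> V"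
  using rooted unfolding rooted_tree_def by blast

lemma funpow_par_in_V: "v \<in> V \<Longrightarrow> (par ^^ n) v \<in> V"
  by (induction n) (auto simp: par_in_V)

lemma funpow_depth: "v \<in> V \<Longrightarrow> (par ^^ dp v) v = r"
  using rooted unfolding rooted_tree_def depth_def by (metis (mono_tags) LeastI_ex)

lemma depth_le: "(par ^^ n) v = r \<Longrightarrow> dp v \<le> n"
  unfolding depth_def by (rule Least_le)

lemma depth_eq_0: "v \<in> V \<Longrightarrow> dp v = 0 \<longleftrightarrow> v = r"
  using funpow_depth depth_le[of 0 r] by fastforce

lemma depth_par: assumes "v \<in> V" "v \<noteq> r" shows "dp v = Suc (dp (par v))"
proof -
  obtain k where k: "dp v = Suc k" using assms depth_eq_0 not0_implies_Suc by blast
  have "(par ^^ k) (par v) = r" using funpow_depth[OF assms(1)] k by (simp add: funpow_swap1)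
  then have "dp (par v) \<le> k" by (rule depth_le)
  moreover have "(par ^^ Suc (dp (par v))) v = r"
    using funpow_depth[OF par_in_V[OF assms(1)]] by (simp add: funpow_swap1)
  then have "dp v \<le> Suc (dp (par v))" by (rule depth_le)
  ultimately show ?thesis using k by simp
qed

lemma depth_funpow: "v \<in> V \<Longrightarrow> dp ((par ^^ j) v) = dp v - j"
proof (induction j)
  case (Suc j)
  let ?x = "(par ^^ j) v"
  show ?case
  proof (cases "?x = r")
    case True
    then have "par ?x = ?x" using rooted unfolding rooted_tree_def by simp
    then show ?thesis using Suc True depth_eq_0[of r] rooted unfolding rooted_tree_def by simp
  next
    case False
    then show ?thesis using Suc depth_par[OF funpow_par_in_V[OF Suc.prems] False] by simp
  qed
qed simp

lemma anc_depth:
  assumes "v \<in> V" "anc par u v"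
  shows "dp u \<le> dp v" "u = (par ^^ (dp v - dp u)) v"
proof -
  obtain n where n: "(par ^^ n) v = u" using assms(2) unfolding anc_def by blast
  then have du: "dp u = dp v - n" using depth_funpow[OF assms(1)] by blast
  then show "dp u \<le> dp v" by simp
  show "u = (par ^^ (dp v - dp u)) v"
  proof (cases "n \<le> dp v")
    case False
    then have "u = r" using du n depth_eq_0 funpow_par_in_V[OF assms(1)] by fastforce
    then show ?thesis using funpow_depth[OF assms(1)] du False by simp
  qed (use du n in simp)
qed

lemma pos_inj: "x \<in> V \<Longrightarrow> y \<in> V \<Longrightarrow> dp x = dp y \<Longrightarrow> pos x = pos y \<Longrightarrow> x = y"
  using planar unfolding planar_layer_order_def inj_on_def layer_def by blast

lemma pos_funpow_mono:
  assumes "x \<in> V" "y \<in> V" "dp x = dp y" "pos x \<le> pos y"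
  shows "pos ((par ^^ j) x) \<le> pos ((par ^^ j) y)"
proof (induction j)
  case (Suc j)
  let ?x = "(par ^^ j) x" and ?y = "(par ^^ j) y"
  have V: "?x \<in> V" "?y \<in> V" using assms funpow_par_in_V by blast+
  have d: "dp ?x = dp ?y" using assms depth_funpow by simp
  show ?case
  proof (cases "pos ?x = pos ?y")
    case True
    then show ?thesis using pos_inj[OF V d] by simp
  next
    case False
    then show ?thesis using Suc V d planar unfolding planar_layer_order_def by simp
  qed
qed (use assms in simp)

definition ray :: "nat \<Rightarrow> (nat \<Rightarrow> 'v) \<Rightarrow> bool" where
  "ray m f \<longleftrightarrow> (\<forall>k\<ge>m. f k \<in> V \<and> dp (f k) = k \<and> par (f (Suc k)) = f k)"

lemma ray_funpow:
  assumes "ray m f" "m \<le> k" "k \<le> l"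
  shows "(par ^^ (l - k)) (f l) = f k"
proof -
  have "(par ^^ j) (f (k + j)) = f k" for j
    using assms(1,2) by (induction j) (auto simp: ray_def funpow_swap1)
  then show ?thesis using assms(3) by (metis le_add_diff_inverse)
qed

lemma pos_funpow_le_ray:
  assumes f: "ray m f" and "x \<in> V" "m \<le> k" "k \<le> dp x" "pos x \<le> pos (f (dp x))"
  shows "pos ((par ^^ (dp x - k)) x) \<le> pos (f k)"
  using pos_funpow_mono[of x "f (dp x)" "dp x - k"] ray_funpow[OF f, of k "dp x"] assms
  by (simp add: ray_def)

lemma ray_le_pos_funpow:
  assumes f: "ray m f" and "x \<in> V" "m \<le> k" "k \<le> dp x" "pos (f (dp x)) \<le> pos x"
  shows "pos (f k) \<le> pos ((par ^^ (dp x - k)) x)"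
  using pos_funpow_mono[of "f (dp x)" x "dp x - k"] ray_funpow[OF f, of k "dp x"] assms
  by (simp add: ray_def)

lemma ray_pos_less:
  assumes f: "ray m f" and g: "ray m g" and less: "pos (f m) < pos (g m)" and "m \<le> k"
  shows "pos (f k) < pos (g k)"
proof (rule ccontr)
  assume "\<not> pos (f k) < pos (g k)"
  moreover have "g k \<in> V" "dp (g k) = k" using g \<open>m \<le> k\<close> by (simp_all add: ray_def)
  ultimately have "pos ((par ^^ (k - m)) (g k)) \<le> pos (f m)"
    using pos_funpow_le_ray[OF f, of "g k" m] \<open>m \<le> k\<close> by simp
  then show False using ray_funpow[OF g order_refl \<open>m \<le> k\<close>] less by simp
qed

lemma downward_path_ray:
  assumes neat: "neat V r par" and g: "downward_path V r par v g" and "v \<in> V"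
  shows "ray (dp v) (\<lambda>k. g (k - dp v))"
proof -
  have child: "g (Suc i) \<in> children V r par (g i)" if "g i \<in> V" for i
    using g that neat unfolding downward_path_def neat_def by blast
  have "g i \<in> V \<and> dp (g i) = dp v + i" for i
  proof (induction i)
    case 0
    then show ?case using g \<open>v \<in> V\<close> unfolding downward_path_def by simp
  next
    case (Suc i)
    then have "g (Suc i) \<in> V" "g (Suc i) \<noteq> r" "par (g (Suc i)) = g i"
      using child[of i] by (auto simp: children_def)
    then show ?case using Suc depth_par by simp
  qed
  then show ?thesis using child by (auto simp: ray_def children_def Suc_diff_le)
qed

definition region :: "nat \<Rightarrow> (nat \<Rightarrow> 'v) option \<Rightarrow> (nat \<Rightarrow> 'v) option \<Rightarrow> 'v set" where
  "region m L R = {x \<in> V. m \<le> dp x \<and> (\<forall>f\<in>set_option L. pos (f (dp x)) \<le> pos x)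
     \<and> (\<forall>g\<in>set_option R. pos x \<le> pos (g (dp x)))}"

lemma region_depth: "x \<in> region m L R \<Longrightarrow> x \<in> V \<and> m \<le> dp x"
  by (simp add: region_def)

definition region_top :: "nat \<Rightarrow> (nat \<Rightarrow> 'v) option \<Rightarrow> (nat \<Rightarrow> 'v) option \<Rightarrow> 'v set" where
  "region_top m L R = {x \<in> region m L R. dp x = m}"

definition ray_set :: "nat \<Rightarrow> (nat \<Rightarrow> 'v) option \<Rightarrow> 'v set" where
  "ray_set m L = (\<Union>f\<in>set_option L. f ` {m..})"

lemma region_funpow:
  assumes L: "pred_option (ray m) L" and R: "pred_option (ray m) R"
    and x: "x \<in> region m L R" and "m \<le> k" "k \<le> dp x"
  shows "(par ^^ (dp x - k)) x \<in> region m L R"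
proof -
  have "x \<in> V" using x by (simp add: region_def)
  then show ?thesis
    using assms funpow_par_in_V depth_funpow pos_funpow_le_ray ray_le_pos_funpow
    unfolding region_def option.pred_set by auto
qed

lemma ray_set_subset_region:
  assumes L: "pred_option (ray m) L" and R: "pred_option (ray m) R"
    and less: "\<forall>f\<in>set_option L. \<forall>g\<in>set_option R. pos (f m) < pos (g m)"
  shows "ray_set m L \<union> ray_set m R \<subseteq> region m L R"
proof -
  have on_ray: "h k \<in> V \<and> dp (h k) = k" if "ray m h" "m \<le> k" for h k
    using that by (simp add: ray_def)
  have "pos (f k) < pos (g k)" if "f \<in> set_option L" "g \<in> set_option R" "m \<le> k" for f g k
    using ray_pos_less[of m f g k] L R less that by (simp add: option.pred_set)
  moreover have "ray m f" if "f \<in> set_option L \<union> set_option R" for f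
    using L R that by (auto simp: option.pred_set)
  ultimately show ?thesis
    using on_ray unfolding ray_set_def region_def by (fastforce intro: less_imp_le)
qed

lemma region_Suc: "region (Suc m) L R = region m L R \<inter> {x. Suc m \<le> dp x}"
  by (auto simp: region_def)

lemma ray_set_Suc:
  "pred_option (ray m) L \<Longrightarrow> ray_set m L \<inter> {x. Suc m \<le> dp x} \<subseteq> ray_set (Suc m) L"
  by (cases L) (auto simp: ray_set_def ray_def)

end

section \<open>Decomposing regions of a layered wheel\<close>

locale wheel_subgraph = planar_tree V r par pos
  for V :: "'v set" and r par pos +
  fixes E :: "'v \<Rightarrow> 'v \<Rightarrow> bool" and X :: "'v \<Rightarrow> 'v set" and t :: nat
    and S :: "'v set" and h :: nat
  assumes edge_sym: "E u w \<Longrightarrow> u \<in> V \<and> w \<in> V \<and> E w u"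
    and layer_edge: "E u w \<Longrightarrow> x \<in> V \<Longrightarrow> dp x = dp u \<Longrightarrow> dp w = dp u
      \<Longrightarrow> \<not> (pos u < pos x \<and> pos x < pos w)"
    and edge_anc: "E u w \<Longrightarrow> dp u \<noteq> dp w \<Longrightarrow> anc par u w \<or> anc par w u"
    and finite_layer: "finite (layer V r par n)"
    and neat: "neat V r par"
    and X: "v \<in> V \<Longrightarrow> finite (X v) \<and> card (X v) \<le> t"
    and X_edge: "v \<in> V \<Longrightarrow> E a b \<Longrightarrow> dp a \<noteq> dp b \<Longrightarrow> anc par v a \<Longrightarrow> \<not> anc par v b \<Longrightarrow> b \<in> X v"
    and finite_S: "finite S" and S_sub: "S \<subseteq> V"
    and branch: "v \<in> V \<Longrightarrow>
      \<exists>g. downward_path V r par v g \<and> finite (range g \<inter> S) \<and> card (range g \<inter> S) \<le> h"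
begin

lemma edge_funpow:
  assumes "E x y" "dp y < dp x"
  shows "y = (par ^^ (dp x - dp y)) x"
proof -
  have "x \<in> V" "y \<in> V" using edge_sym[OF assms(1)] by auto
  then have "\<not> anc par x y" using anc_depth(1) assms(2) by fastforce
  then have "anc par y x" using edge_anc assms by fastforce
  then show ?thesis using anc_depth(2) \<open>x \<in> V\<close> by blast
qed

lemma no_cross:
  assumes \<sigma>: "ray m \<sigma>" and uv: "u \<in> V" "v \<in> V" "m \<le> dp u" "m \<le> dp v"
    and left: "pos u < pos (\<sigma> (dp u))" and right: "pos (\<sigma> (dp v)) < pos v"
  shows "\<not> E u v"
proof
  assume e: "E u v"
  consider "dp u = dp v" | "dp v < dp u" | "dp u < dp v" by linarith
  then show False
  proof cases
    case 1
    have "\<sigma> (dp u) \<in> V" "dp (\<sigma> (dp u)) = dp u" using \<sigma> uv(3) by (simp_all add: ray_def)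
    then show ?thesis using layer_edge[OF e] 1 left right by (metis (full_types))
  next
    case 2
    have "pos v = pos ((par ^^ (dp u - dp v)) u)" using edge_funpow[OF e 2] by (rule arg_cong)
    moreover have "pos ((par ^^ (dp u - dp v)) u) \<le> pos (\<sigma> (dp v))"
      using pos_funpow_le_ray[OF \<sigma> uv(1) uv(4)] 2 left by simp
    ultimately show ?thesis using right by linarith
  next
    case 3
    have "E v u" using edge_sym[OF e] by blast
    have "pos u = pos ((par ^^ (dp v - dp u)) v)" using edge_funpow[OF \<open>E v u\<close> 3] by (rule arg_cong)
    moreover have "pos (\<sigma> (dp u)) \<le> pos ((par ^^ (dp v - dp u)) v)"
      using ray_le_pos_funpow[OF \<sigma> uv(2) uv(3)] 3 right by simp
    ultimately show ?thesis using left by linarith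
  qed
qed

definition sparse_ray :: "nat \<Rightarrow> (nat \<Rightarrow> 'v) \<Rightarrow> bool" where
  "sparse_ray m f \<longleftrightarrow> ray m f \<and> finite (f ` {m..} \<inter> S) \<and> card (f ` {m..} \<inter> S) \<le> h"

lemma sparse_ray_exists: "v \<in> V \<Longrightarrow> \<exists>f. sparse_ray (dp v) f \<and> f (dp v) = v"
proof -
  assume "v \<in> V"
  then obtain g where g: "downward_path V r par v g" "finite (range g \<inter> S)" "card (range g \<inter> S) \<le> h"
    using branch by blast
  define f where "f k = g (k - dp v)" for k
  have "g i \<in> f ` {dp v..}" for i
    unfolding f_def by (rule image_eqI[of _ _ "i + dp v"]) simp_all
  then have "f ` {dp v..} = range g" unfolding f_def by blast
  moreover have "ray (dp v) f" unfolding f_def by (rule downward_path_ray[OF neat g(1) \<open>v \<in> V\<close>])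
  moreover have "f (dp v) = v" using g(1) by (simp add: f_def downward_path_def)
  ultimately have "sparse_ray (dp v) f \<and> f (dp v) = v" using g(2,3) by (simp add: sparse_ray_def)
  then show ?thesis by blast
qed

lemma sparse_ray_Suc:
  assumes f: "sparse_ray m f"
  shows "sparse_ray (Suc m) f"
proof -
  have sub: "f ` {Suc m..} \<inter> S \<subseteq> f ` {m..} \<inter> S" by auto
  have fin: "finite (f ` {m..} \<inter> S)" and "card (f ` {m..} \<inter> S) \<le> h"
    using f by (simp_all add: sparse_ray_def)
  then have "finite (f ` {Suc m..} \<inter> S)" "card (f ` {Suc m..} \<inter> S) \<le> h"
    using finite_subset[OF sub fin] card_mono[OF fin sub] by simp_all
  moreover have "ray (Suc m) f" using f by (simp add: sparse_ray_def ray_def)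
  ultimately show ?thesis by (simp add: sparse_ray_def)
qed

lemma card_ray_set:
  assumes "pred_option (sparse_ray m) L"
  shows "finite (S \<inter> ray_set m L) \<and> card (S \<inter> ray_set m L) \<le> h"
proof (cases L)
  case None
  then show ?thesis by (simp add: ray_set_def)
next
  case (Some f)
  then have "S \<inter> ray_set m L = f ` {m..} \<inter> S" by (auto simp: ray_set_def)
  then show ?thesis using assms Some by (simp add: sparse_ray_def)
qed

definition upper_nbrs :: "nat \<Rightarrow> (nat \<Rightarrow> 'v) option \<Rightarrow> (nat \<Rightarrow> 'v) option \<Rightarrow> 'v set" where
  "upper_nbrs m L R = {y \<in> S. dp y < m \<and> (\<exists>x\<in>region m L R \<inter> S. E x y)}"

definition piece :: "nat \<Rightarrow> (nat \<Rightarrow> 'v) option \<Rightarrow> (nat \<Rightarrow> 'v) option \<Rightarrow> 'v set" where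
  "piece m L R = S \<inter> (region m L R \<union> upper_nbrs m L R)"

definition admissible :: "nat \<Rightarrow> (nat \<Rightarrow> 'v) option \<Rightarrow> (nat \<Rightarrow> 'v) option \<Rightarrow> bool" where
  "admissible m L R \<longleftrightarrow> pred_option (sparse_ray m) L \<and> pred_option (sparse_ray m) R
     \<and> (\<forall>f\<in>set_option L. \<forall>g\<in>set_option R. pos (f m) < pos (g m))
     \<and> card (par ` region_top m L R) \<le> 2"

definition decomposable :: "nat \<Rightarrow> (nat \<Rightarrow> 'v) option \<Rightarrow> (nat \<Rightarrow> 'v) option \<Rightarrow> bool" where
  "decomposable m L R \<longleftrightarrow> (\<exists>I p i0 B. rooted_decomp (piece m L R) E I p i0 B
     \<and> (\<forall>i\<in>I. card (B i) \<le> 2 * (t + 1) + 3 * h)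
     \<and> S \<inter> (upper_nbrs m L R \<union> ray_set m L \<union> ray_set m R) \<subseteq> B i0)"

lemma admissible_rays:
  assumes "admissible m L R"
  shows "pred_option (ray m) L" "pred_option (ray m) R"
    "ray_set m L \<union> ray_set m R \<subseteq> region m L R"
proof -
  show L: "pred_option (ray m) L" and R: "pred_option (ray m) R"
    using assms by (auto simp: admissible_def sparse_ray_def option.pred_set)
  show "ray_set m L \<union> ray_set m R \<subseteq> region m L R"
    using ray_set_subset_region[OF L R] assms by (simp add: admissible_def)
qed

lemma finite_region_top: "finite (region_top m L R)"
proof -
  have "region_top m L R \<subseteq> layer V r par m" by (auto simp: region_top_def region_def layer_def)
  then show ?thesis using finite_layer finite_subset by blast
qed

lemma upper_nbrs_mono: "region m L R \<subseteq> region m L' R' \<Longrightarrow> upper_nbrs m L R \<subseteq> upper_nbrs m L' R'"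
  unfolding upper_nbrs_def by blast

lemma upper_nbrs_subset:
  assumes L: "pred_option (ray m) L" and R: "pred_option (ray m) R"
  shows "upper_nbrs m L R \<subseteq> (\<Union>q\<in>par ` region_top m L R. insert q (X q))"
proof
  fix y assume "y \<in> upper_nbrs m L R"
  then obtain x where y: "y \<in> S" "dp y < m" and x: "x \<in> region m L R" "E x y"
    unfolding upper_nbrs_def by blast
  have xV: "x \<in> V" "m \<le> dp x" and "y \<in> V" using x(1) y(1) S_sub by (auto simp: region_def)
  define z where "z = (par ^^ (dp x - m)) x"
  have z: "z \<in> region_top m L R"
    using region_funpow[OF L R x(1) order_refl xV(2)] depth_funpow[OF xV(1)] xV(2)
    unfolding z_def region_top_def by simp
  then have "z \<in> V" "dp z = m" by (auto simp: region_top_def region_def)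
  then have "z \<noteq> r" using y(2) depth_eq_0[OF \<open>z \<in> V\<close>] by auto
  then have dq: "dp (par z) = m - 1" using depth_par \<open>z \<in> V\<close> \<open>dp z = m\<close> by simp
  have "par z = (par ^^ Suc (dp x - m)) x" by (simp add: z_def)
  moreover have "Suc (dp x - m) = dp x - dp (par z)" using dq y(2) xV(2) by simp
  ultimately have q: "par z = (par ^^ (dp x - dp (par z))) x" by metis
  have y_eq: "y = (par ^^ (dp x - dp y)) x" by (rule edge_funpow[OF x(2)]) (use y(2) xV(2) in simp)
  have "y \<in> insert (par z) (X (par z))"
  proof (cases "dp y = dp (par z)")
    case True
    then show ?thesis using q y_eq by (metis insertI1)
  next
    case False
    then have "\<not> anc par (par z) y" using anc_depth(1)[OF \<open>y \<in> V\<close>] dq y(2) by fastforce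
    moreover have "anc par (par z) x" using q unfolding anc_def by metis
    ultimately show ?thesis using X_edge[OF par_in_V[OF \<open>z \<in> V\<close>] x(2)] y(2) xV(2) by simp
  qed
  then show "y \<in> (\<Union>q\<in>par ` region_top m L R. insert q (X q))" using z by blast
qed

lemma card_upper_nbrs:
  assumes adm: "admissible m L R"
  shows "finite (upper_nbrs m L R) \<and> card (upper_nbrs m L R) \<le> 2 * (t + 1)"
proof -
  let ?Q = "par ` region_top m L R"
  have Q: "finite ?Q" "card ?Q \<le> 2" "?Q \<subseteq> V"
    using finite_region_top adm par_in_V by (auto simp: admissible_def region_top_def region_def)
  have X': "finite (X q)" "card (insert q (X q)) \<le> t + 1" if "q \<in> ?Q" for q
    using X[of q] Q(3) that by (auto simp: card_insert_if)
  have sub: "upper_nbrs m L R \<subseteq> (\<Union>q\<in>?Q. insert q (X q))"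
    using upper_nbrs_subset[OF admissible_rays(1,2)[OF adm]] .
  have "card (\<Union>q\<in>?Q. insert q (X q)) \<le> (\<Sum>q\<in>?Q. card (insert q (X q)))"
    by (rule card_UN_le[OF Q(1)])
  also have "\<dots> \<le> (\<Sum>q\<in>?Q. t + 1)" by (rule sum_mono) (rule X'(2))
  also have "\<dots> = card ?Q * (t + 1)" by simp
  also have "\<dots> \<le> 2 * (t + 1)" by (rule mult_le_mono1[OF Q(2)])
  finally have bound: "card (\<Union>q\<in>?Q. insert q (X q)) \<le> 2 * (t + 1)" .
  have fin: "finite (\<Union>q\<in>?Q. insert q (X q))" by (rule finite_UN_I[OF Q(1)]) (simp add: X'(1))
  show ?thesis using finite_subset[OF sub fin] order_trans[OF card_mono[OF fin sub] bound] by simp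
qed

lemma card_root_bag:
  assumes "finite U" "card U \<le> 2 * (t + 1)"
    and "pred_option (sparse_ray m) L" "pred_option (sparse_ray m) R" "pred_option (sparse_ray m) M"
  shows "card (S \<inter> (U \<union> ray_set m L \<union> ray_set m R \<union> ray_set m M)) \<le> 2 * (t + 1) + 3 * h"
proof -
  let ?A = "S \<inter> ray_set m L" and ?B = "S \<inter> ray_set m R" and ?C = "S \<inter> ray_set m M"
  have A: "finite ?A" "card ?A \<le> h" and B: "finite ?B" "card ?B \<le> h" and C: "finite ?C" "card ?C \<le> h"
    using card_ray_set[OF assms(3)] card_ray_set[OF assms(4)] card_ray_set[OF assms(5)] by blast+
  have "card (S \<inter> (U \<union> ray_set m L \<union> ray_set m R \<union> ray_set m M)) \<le> card (U \<union> ?A \<union> ?B \<union> ?C)"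
    using assms(1) A(1) B(1) C(1) by (intro card_mono) auto
  also have "\<dots> \<le> card U + card ?A + card ?B + card ?C"
    using card_Un_le[of "U \<union> ?A \<union> ?B" ?C] card_Un_le[of "U \<union> ?A" ?B] card_Un_le[of U ?A] by linarith
  finally show ?thesis using assms(2) A(2) B(2) C(2) by linarith
qed

lemma decomposable_deep:
  assumes adm: "admissible m L R" and deep: "\<forall>s\<in>S. dp s < m"
  shows "decomposable m L R"
proof -
  have "S \<inter> region m L R = {}" using deep by (auto simp: region_def)
  then have "piece m L R = {}" "S \<inter> (upper_nbrs m L R \<union> ray_set m L \<union> ray_set m R) = {}"
    using admissible_rays(3)[OF adm] by (auto simp: piece_def upper_nbrs_def)
  then show ?thesis unfolding decomposable_def
    by (intro exI[of _ "{0}"] exI[of _ "\<lambda>_. 0"] exI[of _ 0] exI[of _ "\<lambda>_. {}"])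
      (simp add: rooted_decomp_single)
qed

lemma admissible_Suc:
  assumes adm: "admissible m L R" and top: "region_top m L R \<subseteq> ray_set m L \<union> ray_set m R"
  shows "admissible (Suc m) L R"
proof -
  note rays = admissible_rays[OF adm]
  have "par ` region_top (Suc m) L R \<subseteq> (\<lambda>f. f m) ` (set_option L \<union> set_option R)"
  proof
    fix q assume "q \<in> par ` region_top (Suc m) L R"
    then obtain x where x: "x \<in> region m L R" "dp x = Suc m" "q = par x"
      by (auto simp: region_top_def region_Suc)
    then have "q \<in> region_top m L R"
      using region_funpow[OF rays(1,2) x(1), of m] depth_funpow[of x 1] by (simp add: region_top_def region_def)
    then have "q \<in> ray_set m L \<union> ray_set m R" "dp q = m" using top by (auto simp: region_top_def)
    then obtain f k where "f \<in> set_option L \<union> set_option R" "m \<le> k" "q = f k" "dp q = m"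
      by (auto simp: ray_set_def)
    moreover have "ray m f" using rays(1,2) \<open>f \<in> set_option L \<union> set_option R\<close> by (auto simp: option.pred_set)
    ultimately show "q \<in> (\<lambda>f. f m) ` (set_option L \<union> set_option R)" by (auto simp: ray_def)
  qed
  then have "card (par ` region_top (Suc m) L R) \<le> card ((\<lambda>f. f m) ` (set_option L \<union> set_option R))"
    by (intro card_mono) simp_all
  also have "\<dots> \<le> card (set_option L \<union> set_option R)"
    by (intro card_image_le) simp
  also have "\<dots> \<le> 2"
    using card_Un_le[of "set_option L" "set_option R"] card_set_option_le[of L] card_set_option_le[of R] by linarith
  finally have "card (par ` region_top (Suc m) L R) \<le> 2" .
  moreover have "pred_option (sparse_ray (Suc m)) L" "pred_option (sparse_ray (Suc m)) R"
    using adm sparse_ray_Suc by (auto simp: admissible_def option.pred_set)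
  moreover have "pos (f (Suc m)) < pos (g (Suc m))" if "f \<in> set_option L" "g \<in> set_option R" for f g
    using ray_pos_less[of m f g "Suc m"] rays(1,2) adm that by (simp add: admissible_def option.pred_set)
  ultimately show ?thesis by (simp add: admissible_def)
qed

lemma upper_nbrs_Suc:
  assumes L: "pred_option (ray m) L" and R: "pred_option (ray m) R"
  shows "upper_nbrs (Suc m) L R \<subseteq> upper_nbrs m L R \<union> (S \<inter> region_top m L R)"
proof
  fix y assume "y \<in> upper_nbrs (Suc m) L R"
  then obtain x where y: "y \<in> S" "dp y < Suc m" and x: "x \<in> region m L R" "Suc m \<le> dp x" "x \<in> S" "E x y"
    by (auto simp: upper_nbrs_def region_Suc)
  show "y \<in> upper_nbrs m L R \<union> (S \<inter> region_top m L R)"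
  proof (cases "dp y < m")
    case True
    then show ?thesis using y x by (auto simp: upper_nbrs_def)
  next
    case False
    then have "dp y = m" using y(2) by simp
    then have "y = (par ^^ (dp x - m)) x" using edge_funpow[OF x(4)] x(2) by (metis Suc_le_lessD)
    then have "y \<in> region m L R" using region_funpow[OF L R x(1) order_refl] x(2) by simp
    then show ?thesis using y(1) \<open>dp y = m\<close> by (simp add: region_top_def)
  qed
qed

lemma decomposable_Suc:
  assumes adm: "admissible m L R" and top: "region_top m L R \<subseteq> ray_set m L \<union> ray_set m R"
    and dec: "decomposable (Suc m) L R"
  shows "decomposable m L R"
proof -
  define Y where "Y = S \<inter> (upper_nbrs m L R \<union> ray_set m L \<union> ray_set m R)"
  obtain I p i0 B where D: "rooted_decomp (piece (Suc m) L R) E I p i0 B"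
    and width: "\<forall>i\<in>I. card (B i) \<le> 2 * (t + 1) + 3 * h"
    and root: "S \<inter> (upper_nbrs (Suc m) L R \<union> ray_set (Suc m) L \<union> ray_set (Suc m) R) \<subseteq> B i0"
    using dec unfolding decomposable_def by blast
  note rays = admissible_rays[OF adm]
  note upper = upper_nbrs_Suc[OF rays(1,2)]
  have upper_depth: "dp y < m" if "y \<in> upper_nbrs m L R" for y using that by (simp add: upper_nbrs_def)
  have pieces: "piece m L R = piece (Suc m) L R \<union> Y"
  proof
    show "piece m L R \<subseteq> piece (Suc m) L R \<union> Y"
    proof
      fix x assume x: "x \<in> piece m L R"
      show "x \<in> piece (Suc m) L R \<union> Y"
      proof (cases "x \<in> region_top m L R")
        case True
        then show ?thesis using x top unfolding piece_def Y_def by blast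
      next
        case False
        then show ?thesis using x region_depth[of x m L R]
          by (auto simp: piece_def Y_def region_Suc region_top_def)
      qed
    qed
    show "piece (Suc m) L R \<union> Y \<subseteq> piece m L R"
      using upper rays(3) unfolding piece_def Y_def region_Suc region_top_def by blast
  qed
  have root_Y: "piece (Suc m) L R \<inter> Y \<subseteq> B i0"
  proof
    fix z assume z: "z \<in> piece (Suc m) L R \<inter> Y"
    show "z \<in> B i0"
    proof (cases "z \<in> upper_nbrs (Suc m) L R")
      case True
      then show ?thesis using root z unfolding piece_def by blast
    next
      case False
      then have "Suc m \<le> dp z" "z \<in> S" using z region_depth by (auto simp: piece_def)
      then have "z \<in> ray_set m L \<union> ray_set m R" using z upper_depth[of z] by (auto simp: Y_def)
      then show ?thesis
        using root ray_set_Suc[OF rays(1)] ray_set_Suc[OF rays(2)] \<open>Suc m \<le> dp z\<close> \<open>z \<in> S\<close> by blast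
    qed
  qed
  have edges: "v \<in> piece (Suc m) L R"
    if u: "u \<in> piece (Suc m) L R - Y" and v: "v \<in> piece (Suc m) L R \<union> Y" and e: "E u v \<or> E v u" for u v
  proof -
    have "E u v" using e edge_sym by blast
    have "u \<in> S" "u \<notin> upper_nbrs (Suc m) L R" using u upper top unfolding piece_def Y_def by blast+
    then have u': "u \<in> S \<inter> region (Suc m) L R" using u by (simp add: piece_def)
    have v': "v \<in> S \<inter> (region m L R \<union> upper_nbrs m L R)"
      using v unfolding pieces[symmetric] by (simp add: piece_def)
    show ?thesis
    proof (cases "dp v < Suc m")
      case True
      then show ?thesis using u' v' \<open>E u v\<close> by (auto simp: piece_def upper_nbrs_def)
    next
      case False
      then show ?thesis using v' upper_depth[of v] by (auto simp: piece_def region_Suc)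
    qed
  qed
  have card_Y: "card Y \<le> 2 * (t + 1) + 3 * h"
    using card_root_bag[of "upper_nbrs m L R" m L R None] card_upper_nbrs[OF adm] adm
    by (simp add: Y_def admissible_def ray_set_def)
  have "\<exists>I p i0 B. rooted_decomp (piece (Suc m) L R \<union> Y) E I p i0 B \<and> B i0 = Y
      \<and> (\<forall>i\<in>I. card (B i) \<le> 2 * (t + 1) + 3 * h)"
    by (rule rooted_decomp_extend[OF D root_Y _ width card_Y]) (use edges in blast)
  then obtain I' p' i0' B' where "rooted_decomp (piece m L R) E I' p' i0' B'" "B' i0' = Y"
    "\<forall>i\<in>I'. card (B' i) \<le> 2 * (t + 1) + 3 * h"
    unfolding pieces by blast
  then show ?thesis unfolding decomposable_def Y_def by blast
qed

definition top_weight :: "nat \<Rightarrow> (nat \<Rightarrow> 'v) option \<Rightarrow> (nat \<Rightarrow> 'v) option \<Rightarrow> nat" where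
  "top_weight m L R = card (region_top m L R) + (if L = None then 1 else 0) + (if R = None then 1 else 0)"

context
  fixes m :: nat and L R :: "(nat \<Rightarrow> 'v) option" and \<sigma> :: "nat \<Rightarrow> 'v"
  assumes adm: "admissible m L R" and \<sigma>: "sparse_ray m \<sigma>"
    and \<sigma>_top: "\<sigma> m \<in> region_top m L R" and \<sigma>_new: "\<sigma> m \<notin> ray_set m L \<union> ray_set m R"
begin

lemma split_ray: "ray m \<sigma>"
  using \<sigma> by (simp add: sparse_ray_def)

lemma left_less_split:
  assumes f: "f \<in> set_option L" and "m \<le> k"
  shows "pos (f k) < pos (\<sigma> k)"
proof -
  have ray: "ray m f" using admissible_rays(1)[OF adm] f by (simp add: option.pred_set)
  have on: "f m \<in> V" "dp (f m) = m" "\<sigma> m \<in> V" "dp (\<sigma> m) = m"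
    using ray split_ray by (simp_all add: ray_def)
  have "f m \<in> ray_set m L" using f by (auto simp: ray_set_def)
  then have "f m \<noteq> \<sigma> m" using \<sigma>_new by (metis UnI1)
  moreover have "pos (f m) \<le> pos (\<sigma> m)" using \<sigma>_top f on(4) by (auto simp: region_top_def region_def)
  ultimately have "pos (f m) < pos (\<sigma> m)" using pos_inj[OF on(1,3)] on(2,4) by fastforce
  then show ?thesis using ray_pos_less[OF ray split_ray _ \<open>m \<le> k\<close>] by blast
qed

lemma split_less_right:
  assumes g: "g \<in> set_option R" and "m \<le> k"
  shows "pos (\<sigma> k) < pos (g k)"
proof -
  have ray: "ray m g" using admissible_rays(2)[OF adm] g by (simp add: option.pred_set)
  have on: "g m \<in> V" "dp (g m) = m" "\<sigma> m \<in> V" "dp (\<sigma> m) = m"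
    using ray split_ray by (simp_all add: ray_def)
  have "g m \<in> ray_set m R" using g by (auto simp: ray_set_def)
  then have "g m \<noteq> \<sigma> m" using \<sigma>_new by (metis UnI2)
  moreover have "pos (\<sigma> m) \<le> pos (g m)" using \<sigma>_top g on(4) by (auto simp: region_top_def region_def)
  ultimately have "pos (\<sigma> m) < pos (g m)" using pos_inj[OF on(1,3)] on(2,4) by fastforce
  then show ?thesis using ray_pos_less[OF split_ray ray _ \<open>m \<le> k\<close>] by blast
qed

lemma region_split_subset: "region m L (Some \<sigma>) \<subseteq> region m L R" "region m (Some \<sigma>) R \<subseteq> region m L R"
  using left_less_split split_less_right unfolding region_def by (fastforce intro: less_imp_le)+

lemma region_split_cover: "region m L R \<subseteq> region m L (Some \<sigma>) \<union> region m (Some \<sigma>) R"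
  unfolding region_def by auto

lemma strictly_left_of_split:
  "x \<in> region m L (Some \<sigma>) - ray_set m (Some \<sigma>) \<Longrightarrow> pos x < pos (\<sigma> (dp x))"
  using pos_inj[of x "\<sigma> (dp x)"] split_ray
  by (fastforce simp: region_def ray_set_def ray_def)

lemma strictly_right_of_split:
  "x \<in> region m (Some \<sigma>) R - ray_set m (Some \<sigma>) \<Longrightarrow> pos (\<sigma> (dp x)) < pos x"
  using pos_inj[of x "\<sigma> (dp x)"] split_ray
  by (fastforce simp: region_def ray_set_def ray_def)

lemma ray_set_split: "ray_set m (Some \<sigma>) \<subseteq> region m L (Some \<sigma>) \<inter> region m (Some \<sigma>) R"
  using left_less_split split_less_right split_ray
  unfolding ray_set_def region_def by (fastforce simp: ray_def intro: less_imp_le)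

lemma region_split_inter: "region m L (Some \<sigma>) \<inter> region m (Some \<sigma>) R \<subseteq> ray_set m (Some \<sigma>)"
proof
  fix x assume x: "x \<in> region m L (Some \<sigma>) \<inter> region m (Some \<sigma>) R"
  show "x \<in> ray_set m (Some \<sigma>)"
  proof (rule ccontr)
    assume "x \<notin> ray_set m (Some \<sigma>)"
    then have "pos x < pos (\<sigma> (dp x))" using x strictly_left_of_split by blast
    then show False using x by (simp add: region_def)
  qed
qed

lemma admissible_split: "admissible m L (Some \<sigma>)" "admissible m (Some \<sigma>) R"
proof -
  have "par ` region_top m L (Some \<sigma>) \<subseteq> par ` region_top m L R"
    "par ` region_top m (Some \<sigma>) R \<subseteq> par ` region_top m L R"
    using region_split_subset unfolding region_top_def by blast+
  then have "card (par ` region_top m L (Some \<sigma>)) \<le> 2" "card (par ` region_top m (Some \<sigma>) R) \<le> 2"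
    using adm card_mono[OF finite_imageI[OF finite_region_top]] unfolding admissible_def
    by (meson le_trans)+
  then show "admissible m L (Some \<sigma>)" "admissible m (Some \<sigma>) R"
    using adm \<sigma> left_less_split split_less_right by (auto simp: admissible_def)
qed

lemma top_weight_split: "top_weight m L (Some \<sigma>) < top_weight m L R" "top_weight m (Some \<sigma>) R < top_weight m L R"
proof -
  have sub: "region_top m L (Some \<sigma>) \<subseteq> region_top m L R" "region_top m (Some \<sigma>) R \<subseteq> region_top m L R"
    using region_split_subset unfolding region_top_def by blast+
  have "card (region_top m L (Some \<sigma>)) < card (region_top m L R)" if "R = Some g" for g
  proof (rule psubset_card_mono[OF finite_region_top])
    have "ray m g" using admissible_rays(2)[OF adm] that by simp
    then have "g m \<in> region_top m L R" "dp (g m) = m"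
      using admissible_rays(3)[OF adm] that by (auto simp: ray_set_def region_top_def ray_def)
    moreover have "g m \<notin> region m L (Some \<sigma>)"
      using split_less_right[of g m] that \<open>dp (g m) = m\<close> by (auto simp: region_def)
    ultimately show "region_top m L (Some \<sigma>) \<subset> region_top m L R" using sub(1) by (auto simp: region_top_def)
  qed
  moreover have "card (region_top m (Some \<sigma>) R) < card (region_top m L R)" if "L = Some f" for f
  proof (rule psubset_card_mono[OF finite_region_top])
    have "ray m f" using admissible_rays(1)[OF adm] that by simp
    then have "f m \<in> region_top m L R" "dp (f m) = m"
      using admissible_rays(3)[OF adm] that by (auto simp: ray_set_def region_top_def ray_def)
    moreover have "f m \<notin> region m (Some \<sigma>) R"
      using left_less_split[of f m] that \<open>dp (f m) = m\<close> by (auto simp: region_def)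
    ultimately show "region_top m (Some \<sigma>) R \<subset> region_top m L R" using sub(2) by (auto simp: region_top_def)
  qed
  moreover have "card (region_top m L (Some \<sigma>)) \<le> card (region_top m L R)"
    "card (region_top m (Some \<sigma>) R) \<le> card (region_top m L R)"
    using sub by (simp_all add: card_mono finite_region_top)
  ultimately show "top_weight m L (Some \<sigma>) < top_weight m L R" "top_weight m (Some \<sigma>) R < top_weight m L R"
    unfolding top_weight_def by (cases L; cases R; fastforce)+
qed

lemma piece_split_edge:
  assumes u: "u \<in> S \<inter> region m L R - ray_set m (Some \<sigma>)" and v: "v \<in> piece m L R" and e: "E u v"
  shows "(u \<in> piece m L (Some \<sigma>) \<and> v \<in> piece m L (Some \<sigma>))
    \<or> (u \<in> piece m (Some \<sigma>) R \<and> v \<in> piece m (Some \<sigma>) R)"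
proof -
  have uV: "u \<in> V" "m \<le> dp u" and "v \<in> S" using u v region_depth by (auto simp: piece_def)
  have v_low: "v \<in> upper_nbrs m L' R'" if "dp v < m" "u \<in> region m L' R'" for L' R'
    using that u \<open>v \<in> S\<close> e unfolding upper_nbrs_def by blast
  have v_high: "v \<in> region m L R" if "\<not> dp v < m" using that v by (auto simp: piece_def upper_nbrs_def)
  consider "u \<in> region m L (Some \<sigma>) - ray_set m (Some \<sigma>)" | "u \<in> region m (Some \<sigma>) R - ray_set m (Some \<sigma>)"
    using u region_split_cover by blast
  then show ?thesis
  proof cases
    case 1
    have "v \<in> region m L (Some \<sigma>)" if "\<not> dp v < m"
    proof (rule ccontr)
      assume "v \<notin> region m L (Some \<sigma>)"
      then have "pos (\<sigma> (dp v)) < pos v" using v_high that unfolding region_def by auto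
      then show False using no_cross[OF split_ray uV(1) _ uV(2)] strictly_left_of_split[OF 1] e v_high that
        region_depth by blast
    qed
    then show ?thesis using 1 u v_low \<open>v \<in> S\<close> by (auto simp: piece_def)
  next
    case 2
    have "v \<in> region m (Some \<sigma>) R" if "\<not> dp v < m"
    proof (rule ccontr)
      assume "v \<notin> region m (Some \<sigma>) R"
      then have "pos v < pos (\<sigma> (dp v))" using v_high that unfolding region_def by auto
      then show False using no_cross[OF split_ray _ uV(1) _ uV(2)] strictly_right_of_split[OF 2] e
        edge_sym v_high that region_depth by blast
    qed
    then show ?thesis using 2 u v_low \<open>v \<in> S\<close> by (auto simp: piece_def)
  qed
qed

lemma decomposable_split:
  assumes dec1: "decomposable m L (Some \<sigma>)" and dec2: "decomposable m (Some \<sigma>) R"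
  shows "decomposable m L R"
proof -
  define Y where "Y = S \<inter> (upper_nbrs m L R \<union> ray_set m L \<union> ray_set m R \<union> ray_set m (Some \<sigma>))"
  obtain I1 p1 a1 B1 where D1: "rooted_decomp (piece m L (Some \<sigma>)) E I1 p1 a1 B1"
    and w1: "\<forall>i\<in>I1. card (B1 i) \<le> 2 * (t + 1) + 3 * h"
    and r1: "S \<inter> (upper_nbrs m L (Some \<sigma>) \<union> ray_set m L \<union> ray_set m (Some \<sigma>)) \<subseteq> B1 a1"
    using dec1 unfolding decomposable_def by blast
  obtain I2 p2 a2 B2 where D2: "rooted_decomp (piece m (Some \<sigma>) R) E I2 p2 a2 B2"
    and w2: "\<forall>i\<in>I2. card (B2 i) \<le> 2 * (t + 1) + 3 * h"
    and r2: "S \<inter> (upper_nbrs m (Some \<sigma>) R \<union> ray_set m (Some \<sigma>) \<union> ray_set m R) \<subseteq> B2 a2"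
    using dec2 unfolding decomposable_def by blast
  have upper: "upper_nbrs m L (Some \<sigma>) \<subseteq> upper_nbrs m L R" "upper_nbrs m (Some \<sigma>) R \<subseteq> upper_nbrs m L R"
    using upper_nbrs_mono region_split_subset by blast+
  have upper_depth: "dp y < m" if "y \<in> upper_nbrs m L' R'" for y L' R'
    using that by (simp add: upper_nbrs_def)
  have far_right: "x \<notin> region m L (Some \<sigma>)" if x: "x \<in> ray_set m R" for x
  proof -
    obtain g k where g: "g \<in> set_option R" "m \<le> k" "x = g k" using x by (auto simp: ray_set_def)
    then have "dp (g k) = k" using admissible_rays(2)[OF adm] by (auto simp: option.pred_set ray_def)
    then show ?thesis using g split_less_right[OF g(1,2)] by (auto simp: region_def)
  qed
  have far_left: "x \<notin> region m (Some \<sigma>) R" if x: "x \<in> ray_set m L" for x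
  proof -
    obtain f k where f: "f \<in> set_option L" "m \<le> k" "x = f k" using x by (auto simp: ray_set_def)
    then have "dp (f k) = k" using admissible_rays(1)[OF adm] by (auto simp: option.pred_set ray_def)
    then show ?thesis using f left_less_split[OF f(1,2)] by (auto simp: region_def)
  qed
  have pieces: "piece m L R = piece m L (Some \<sigma>) \<union> piece m (Some \<sigma>) R \<union> Y"
    using region_split_subset region_split_cover upper admissible_rays(3)[OF adm] ray_set_split
    unfolding piece_def Y_def by blast
  have "piece m L (Some \<sigma>) \<inter> piece m (Some \<sigma>) R \<subseteq> Y"
    using upper region_split_inter unfolding piece_def Y_def by blast
  moreover have "piece m L (Some \<sigma>) \<inter> Y \<subseteq> B1 a1" "piece m (Some \<sigma>) R \<inter> Y \<subseteq> B2 a2"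
    using r1 r2 far_left far_right upper_depth region_depth unfolding piece_def Y_def by fastforce+
  moreover have "(u \<in> piece m L (Some \<sigma>) \<and> v \<in> piece m L (Some \<sigma>))
      \<or> (u \<in> piece m (Some \<sigma>) R \<and> v \<in> piece m (Some \<sigma>) R)"
    if "u \<in> piece m L (Some \<sigma>) \<union> piece m (Some \<sigma>) R \<union> Y - Y"
      "v \<in> piece m L (Some \<sigma>) \<union> piece m (Some \<sigma>) R \<union> Y" "E u v \<or> E v u" for u v
  proof -
    have "u \<in> S \<inter> region m L R - ray_set m (Some \<sigma>)"
      using that(1) upper region_split_subset unfolding piece_def Y_def by blast
    moreover have "v \<in> piece m L R" "E u v" using that(2,3) edge_sym unfolding pieces by blast+
    ultimately show ?thesis by (rule piece_split_edge)
  qed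
  moreover have "card Y \<le> 2 * (t + 1) + 3 * h"
    using card_root_bag card_upper_nbrs[OF adm] adm \<sigma> unfolding Y_def admissible_def by simp
  ultimately obtain I p i0 B where "rooted_decomp (piece m L R) E I p i0 B" "B i0 = Y"
    "\<forall>i\<in>I. card (B i) \<le> 2 * (t + 1) + 3 * h"
    using rooted_decomp_glue[OF D1 D2 _ _ _ _ w1 w2] unfolding pieces by blast
  then show ?thesis unfolding decomposable_def Y_def by blast
qed

end

lemma admissible_decomposable:
  assumes deep: "\<forall>s\<in>S. dp s < N" and "admissible m L R"
  shows "decomposable m L R"
  using assms(2)
proof (induction "(m, L, R)" arbitrary: m L R
    rule: wf_induct[OF wf_measures[of "[\<lambda>(m, L, R). N - m, \<lambda>(m, L, R). top_weight m L R]"]])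
  case (1 m L R)
  show ?case
  proof (cases "N \<le> m")
    case True
    then show ?thesis using decomposable_deep[OF 1(2)] deep by fastforce
  next
    case deeper: False
    show ?thesis
    proof (cases "region_top m L R \<subseteq> ray_set m L \<union> ray_set m R")
      case True
      then have "decomposable (Suc m) L R" using 1 admissible_Suc deeper by simp
      then show ?thesis using decomposable_Suc[OF 1(2) True] by blast
    next
      case False
      then obtain d where d: "d \<in> region_top m L R" "d \<notin> ray_set m L \<union> ray_set m R" by blast
      then obtain \<sigma> where \<sigma>: "sparse_ray m \<sigma>" "\<sigma> m = d"
        using sparse_ray_exists[of d] by (auto simp: region_top_def region_def)
      note split = 1(2) \<sigma>(1) d[folded \<sigma>(2)]
      have "decomposable m L (Some \<sigma>)" "decomposable m (Some \<sigma>) R"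
        using 1(1) admissible_split[OF split] top_weight_split[OF split] by simp_all
      then show ?thesis by (rule decomposable_split[OF split])
    qed
  qed
qed

lemma treewidth_le: "treewidth S E \<le> 2 * (t + 1) + 3 * h"
proof -
  obtain N where deep: "\<forall>s\<in>S. dp s < N"
    using finite_S finite_nat_set_iff_bounded[of "dp ` S"] by auto
  have "par ` region_top 0 None None \<subseteq> {par r}" using depth_eq_0 by (auto simp: region_top_def region_def)
  then have "card (par ` region_top 0 None None) \<le> card {par r}" by (intro card_mono) simp_all
  then have "admissible 0 None None" by (simp add: admissible_def)
  then obtain I p i0 B where "rooted_decomp (piece 0 None None) E I p i0 B"
    and width: "\<forall>i\<in>I. card (B i) \<le> 2 * (t + 1) + 3 * h"
    using admissible_decomposable[OF deep] unfolding decomposable_def by blast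
  moreover have "piece 0 None None = S" using S_sub by (auto simp: piece_def region_def upper_nbrs_def)
  ultimately have "tree_decomp S E I p i0 B \<and> (\<forall>i\<in>I. card (B i) \<le> 2 * (t + 1) + 3 * h + 1)"
    using rooted_decomp_imp_tree_decomp by fastforce
  then show ?thesis unfolding treewidth_def by (blast intro: Least_le)
qed

end

lemma layered_wheel_subgraph:
  assumes lw: "layered_wheel V r par pos E" and neat: "neat V r par"
    and X: "\<forall>v\<in>V. finite (X v) \<and> card (X v) \<le> t \<and> (\<forall>a b. E a b \<and> depth par r a \<noteq> depth par r b
      \<and> anc par v a \<and> \<not> anc par v b \<longrightarrow> b \<in> X v)"
    and S: "finite S" "S \<subseteq> V"
    and branch: "\<forall>v\<in>V. \<exists>g. downward_path V r par v g \<and> finite (range g \<inter> S) \<and> card (range g \<inter> S) \<le> h"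
  shows "wheel_subgraph V r par pos E X t S h"
proof -
  have rt: "rooted_tree V r par" and pl: "planar_layer_order V r par pos"
    and sym: "\<forall>u w. E u w \<longrightarrow> u \<in> V \<and> w \<in> V \<and> u \<noteq> w \<and> E w u"
    and anc: "\<forall>u w. E u w \<and> depth par r u \<noteq> depth par r w \<longrightarrow> anc par u w \<or> anc par w u"
    and fin: "\<forall>n. finite (layer V r par n)"
    using lw unfolding layered_wheel_def by blast+
  have layer_edge: "\<not> (pos u < pos x \<and> pos x < pos w)"
    if e: "E u w" and x: "x \<in> V" "depth par r x = depth par r u" and w: "depth par r w = depth par r u"
    for u w x
  proof -
    let ?L = "layer V r par (depth par r u)"
    have in_layer: "u \<in> ?L" "w \<in> ?L" "x \<in> ?L" using sym e x w by (auto simp: layer_def)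
    then have "E u w \<longleftrightarrow> (pos u < pos w \<and> \<not> (\<exists>x\<in>?L. pos u < pos x \<and> pos x < pos w))
        \<or> (pos w < pos u \<and> \<not> (\<exists>x\<in>?L. pos w < pos x \<and> pos x < pos u))"
      using lw unfolding layered_wheel_def by blast
    then show ?thesis using e in_layer(3) by auto
  qed
  have axioms: "E u w \<Longrightarrow> u \<in> V \<and> w \<in> V \<and> E w u"
    "E u w \<Longrightarrow> depth par r u \<noteq> depth par r w \<Longrightarrow> anc par u w \<or> anc par w u"
    "v \<in> V \<Longrightarrow> finite (X v) \<and> card (X v) \<le> t"
    "v \<in> V \<Longrightarrow> E a b \<Longrightarrow> depth par r a \<noteq> depth par r b \<Longrightarrow> anc par v a \<Longrightarrow> \<not> anc par v b
      \<Longrightarrow> b \<in> X v"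
    "v \<in> V \<Longrightarrow> \<exists>g. downward_path V r par v g \<and> finite (range g \<inter> S) \<and> card (range g \<inter> S) \<le> h"
    for u w v a b
    using sym anc X branch by blast+
  show ?thesis
    by unfold_locales (fact rt pl fin[rule_format] layer_edge neat S axioms)+
qed

lemma layered_wheel_treewidth_bound:
  assumes lw: "layered_wheel V r par pos E" and neat: "neat V r par" and up: "upward_restricted V r par E"
  obtains t where "\<And>S h. finite S \<Longrightarrow> S \<subseteq> V
    \<Longrightarrow> \<forall>v\<in>V. \<exists>g. downward_path V r par v g \<and> finite (range g \<inter> S) \<and> card (range g \<inter> S) \<le> h
    \<Longrightarrow> treewidth S E \<le> 2 * (t + 1) + 3 * h"
proof -
  obtain t where "\<forall>v\<in>V. \<exists>X. finite X \<and> card X \<le> t \<and> (\<forall>x\<in>X. anc par x v)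
      \<and> (\<forall>a b. E a b \<and> depth par r a \<noteq> depth par r b \<and> anc par v a \<and> \<not> anc par v b \<longrightarrow> b \<in> X)"
    using up unfolding upward_restricted_def by blast
  from bchoice[OF this] obtain X where "\<forall>v\<in>V. finite (X v) \<and> card (X v) \<le> t \<and> (\<forall>x\<in>X v. anc par x v)
      \<and> (\<forall>a b. E a b \<and> depth par r a \<noteq> depth par r b \<and> anc par v a \<and> \<not> anc par v b \<longrightarrow> b \<in> X v)"
    by blast
  then have X: "\<forall>v\<in>V. finite (X v) \<and> card (X v) \<le> t
      \<and> (\<forall>a b. E a b \<and> depth par r a \<noteq> depth par r b \<and> anc par v a \<and> \<not> anc par v b \<longrightarrow> b \<in> X v)"
    by blast
  have "treewidth S E \<le> 2 * (t + 1) + 3 * h"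
    if "finite S" "S \<subseteq> V"
      "\<forall>v\<in>V. \<exists>g. downward_path V r par v g \<and> finite (range g \<inter> S) \<and> card (range g \<inter> S) \<le> h"
    for S h
  proof -
    interpret wheel_subgraph V r par pos E X t S h
      using layered_wheel_subgraph[OF lw neat X that] .
    show ?thesis by (rule treewidth_le)
  qed
  then show ?thesis using that by blast
qed

theorem theorem1p12:
  fixes V :: "'v set" and r :: 'v and par :: "'v \<Rightarrow> 'v" and pos :: "'v \<Rightarrow> nat"
    and E :: "'v \<Rightarrow> 'v \<Rightarrow> bool" and F :: "'v set set"
  assumes "layered_wheel V r par pos E"
    and "neat V r par"
    and "upward_restricted V r par E"
    and "\<forall>S\<in>F. finite S \<and> S \<subseteq> V"
    and "bounded_branch V r par F"
  shows "\<exists>c::nat. \<forall>S\<in>F. treewidth S E \<le> c"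
proof -
  obtain t where t: "\<And>S h. finite S \<Longrightarrow> S \<subseteq> V
    \<Longrightarrow> \<forall>v\<in>V. \<exists>g. downward_path V r par v g \<and> finite (range g \<inter> S) \<and> card (range g \<inter> S) \<le> h
    \<Longrightarrow> treewidth S E \<le> 2 * (t + 1) + 3 * h"
    using layered_wheel_treewidth_bound[OF assms(1-3)] by blast
  obtain h where h: "\<forall>S\<in>F. \<forall>v\<in>V. \<exists>g. downward_path V r par v g
      \<and> finite (range g \<inter> S) \<and> card (range g \<inter> S) \<le> h"
    using assms(5) unfolding bounded_branch_def by blast
  have "treewidth S E \<le> 2 * (t + 1) + 3 * h" if "S \<in> F" for S
    using t[of S h] assms(4) h that by blast
  then show ?thesis by blast
qed

end
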